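(* For every tWF net $N$: $N$ is $*$-sound if and only if $N$ is sub-sound.
   Context: Petri nets and markings. A Petri net is a triple $(P,T,F)$ with $P$ a finite set of places, $T$ a finite set of transitions, $P\cap T=\emptyset$, and $F\subseteq (P\times T)\cup(T\times P)$. For a node $x$, $\bullet x=\{y\mid (y,x)\in F\}$, $x\bullet=\{y\mid (x,y)\in F\}$. A marking is a multiset over $P$ (a function $P\to\mathbb N$); sets of places are identified with bags of multiplicity one, $+,-,\le$ are pointwise, and $k.m$ is the sum of $k$ copies of $m$. Transition $t$ is enabled at $m$ iff $\bullet t\le m$, firing gives $m-\bullet t+t\bullet$, and $m\xrightarrow{*}m'$ denotes reachability by a finite (possibly empty) firing sequence. Workflow nets. A pWF net is $(P,T,F,I,O)$ with $(P,T,F)$ a Petri net, $I,O\subseteq P$ non-empty, every node reachable by a directed path from some node of $I$, and some node of $O$ reachable from every node. A tWF net is the same with $I,O$ non-empty subsets of $T$. Input nodes may have incoming edges and output nodes outgoing edges. The place-completion $\mathrm{pc}(N)$ of a tWF net $N=(P,T,F,I,O)$ is obtained by adding two fresh places $p_i,p_o$ with edges $(p_i,t)$ for all $t\in I$ and $(t,p_o)$ for all $t\in O$, and taking input set $\{p_i\}$ and output set $\{p_o\}$. Soundness. A pWF net is $k$-sound if for every marking $m$ with $k.I\xrightarrow{*}m$ we have $m\xrightarrow{*}k.O$; $*$-sound if $k$-sound for all $k\ge1$; sub-sound if for all integers $k\ge k'\ge 0$ and every marking $m'$: $k.I\xrightarrow{*}m'+k'.O$ implies $m'\xrightarrow{*}(k-k').O$.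 A tWF net is $*$-sound (resp. sub-sound) iff its place-completion is. *)

theory Defs
  imports Main "HOL-Library.Function_Algebras"
begin

definition petri_net :: "'n set \<Rightarrow> 'n set \<Rightarrow> ('n \<times> 'n) set \<Rightarrow> bool" where
  "petri_net P T F \<longleftrightarrow> finite P \<and> finite T \<and> P \<inter> T = {} \<and> F \<subseteq> (P \<times> T) \<union> (T \<times> P)"

definition preset :: "('n \<times> 'n) set \<Rightarrow> 'n \<Rightarrow> 'n set" where
  "preset F x = {y. (y, x) \<in> F}"

definition postset :: "('n \<times> 'n) set \<Rightarrow> 'n \<Rightarrow> 'n set" where
  "postset F x = {y. (x, y) \<in> F}"

text \<open>Markings are multisets over places, represented as functions to nat
(pointwise +, -, \<le>). A set is identified with its multiplicity-one bag.\<close>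

type_synonym 'n marking = "'n \<Rightarrow> nat"

definition bag_of :: "'n set \<Rightarrow> 'n marking" where
  "bag_of A = (\<lambda>p. if p \<in> A then 1 else 0)"

definition scale :: "nat \<Rightarrow> 'n marking \<Rightarrow> 'n marking" where
  "scale k m = (\<lambda>p. k * m p)"

definition enabled :: "('n \<times> 'n) set \<Rightarrow> 'n marking \<Rightarrow> 'n \<Rightarrow> bool" where
  "enabled F m t \<longleftrightarrow> bag_of (preset F t) \<le> m"

definition fire :: "('n \<times> 'n) set \<Rightarrow> 'n marking \<Rightarrow> 'n \<Rightarrow> 'n marking" where
  "fire F m t = m - bag_of (preset F t) + bag_of (postset F t)"

definition step :: "'n set \<Rightarrow> ('n \<times> 'n) set \<Rightarrow> 'n marking \<Rightarrow> 'n marking \<Rightarrow> bool" where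
  "step T F m m' \<longleftrightarrow> (\<exists>t\<in>T. enabled F m t \<and> m' = fire F m t)"

definition reach :: "'n set \<Rightarrow> ('n \<times> 'n) set \<Rightarrow> 'n marking \<Rightarrow> 'n marking \<Rightarrow> bool" where
  "reach T F = (step T F)\<^sup>*\<^sup>*"

definition wf_connected :: "'n set \<Rightarrow> 'n set \<Rightarrow> ('n \<times> 'n) set \<Rightarrow> 'n set \<Rightarrow> 'n set \<Rightarrow> bool" where
  "wf_connected P T F In Out \<longleftrightarrow>
     In \<noteq> {} \<and> Out \<noteq> {} \<and>
     (\<forall>x \<in> P \<union> T. \<exists>i \<in> In. (i, x) \<in> F\<^sup>*) \<and>
     (\<forall>x \<in> P \<union> T. \<exists>q \<in> Out. (x, q) \<in> F\<^sup>*)"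

definition pWF_net :: "'n set \<Rightarrow> 'n set \<Rightarrow> ('n \<times> 'n) set \<Rightarrow> 'n set \<Rightarrow> 'n set \<Rightarrow> bool" where
  "pWF_net P T F In Out \<longleftrightarrow> petri_net P T F \<and> In \<subseteq> P \<and> Out \<subseteq> P \<and> wf_connected P T F In Out"

definition tWF_net :: "'n set \<Rightarrow> 'n set \<Rightarrow> ('n \<times> 'n) set \<Rightarrow> 'n set \<Rightarrow> 'n set \<Rightarrow> bool" where
  "tWF_net P T F In Out \<longleftrightarrow> petri_net P T F \<and> In \<subseteq> T \<and> Out \<subseteq> T \<and> wf_connected P T F In Out"

definition k_sound :: "nat \<Rightarrow> 'n set \<Rightarrow> ('n \<times> 'n) set \<Rightarrow> 'n set \<Rightarrow> 'n set \<Rightarrow> bool" where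
  "k_sound k T F In Out \<longleftrightarrow>
     (\<forall>m. reach T F (scale k (bag_of In)) m \<longrightarrow> reach T F m (scale k (bag_of Out)))"

definition star_sound :: "'n set \<Rightarrow> ('n \<times> 'n) set \<Rightarrow> 'n set \<Rightarrow> 'n set \<Rightarrow> bool" where
  "star_sound T F In Out \<longleftrightarrow> (\<forall>k\<ge>1. k_sound k T F In Out)"

definition sub_sound :: "'n set \<Rightarrow> ('n \<times> 'n) set \<Rightarrow> 'n set \<Rightarrow> 'n set \<Rightarrow> bool" where
  "sub_sound T F In Out \<longleftrightarrow>
     (\<forall>k k' m'. k' \<le> k \<longrightarrow>
        reach T F (scale k (bag_of In)) (m' + scale k' (bag_of Out)) \<longrightarrow>
        reach T F m' (scale (k - k') (bag_of Out)))"

datatype 'n pc_node = Orig 'n | PIn | POut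

definition pc_places :: "'n set \<Rightarrow> 'n pc_node set" where
  "pc_places P = Orig ` P \<union> {PIn, POut}"

definition pc_trans :: "'n set \<Rightarrow> 'n pc_node set" where
  "pc_trans T = Orig ` T"

definition pc_flow :: "('n \<times> 'n) set \<Rightarrow> 'n set \<Rightarrow> 'n set \<Rightarrow> ('n pc_node \<times> 'n pc_node) set" where
  "pc_flow F In Out = map_prod Orig Orig ` F \<union> {(PIn, Orig t) | t. t \<in> In} \<union> {(Orig t, POut) | t. t \<in> Out}"

text \<open>A tWF net is *-sound (sub-sound) iff its place-completion is.\<close>
definition tWF_star_sound :: "'n set \<Rightarrow> 'n set \<Rightarrow> ('n \<times> 'n) set \<Rightarrow> 'n set \<Rightarrow> 'n set \<Rightarrow> bool" where
  "tWF_star_sound P T F In Out \<longleftrightarrow> star_sound (pc_trans T) (pc_flow F In Out) {PIn} {POut}"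

definition tWF_sub_sound :: "'n set \<Rightarrow> 'n set \<Rightarrow> ('n \<times> 'n) set \<Rightarrow> 'n set \<Rightarrow> 'n set \<Rightarrow> bool" where
  "tWF_sub_sound P T F In Out \<longleftrightarrow> sub_sound (pc_trans T) (pc_flow F In Out) {PIn} {POut}"

end

theory Submission
  imports Defs
begin

(* Sub-soundness with k' = 0 is exactly k-soundness, so sub-soundness
   always implies *-soundness.  For the converse, two structural properties of a net
   suffice:
   (a) no output place is consumed by any transition, so tokens on output places are
       an inert frame: a run from m' + k'.O is a run from m' with k'.O carried along;
   (b) every transition has a non-empty preset, so the empty marking is dead, which
       handles the degenerate case k = 0 not covered by *-soundness.
   Given (a), k-soundness yields m' + k'.O ->* k.O, hence m' ->* (k - k').O. *)

lemma reach_frame_unconsumed: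
  assumes unconsumed: "\<And>t p. t \<in> T \<Longrightarrow> p \<in> preset F t \<Longrightarrow> c p = 0"
    and run: "reach T F (m + c) x"
  shows "\<exists>y. x = y + c \<and> reach T F m y"
  using run[unfolded reach_def]
proof (induction rule: rtranclp_induct)
  case base
  then show ?case by (auto simp: reach_def)
next
  case (step x x')
  then obtain y where x_split: "x = y + c" and run_y: "reach T F m y" by blast
  from step(2) obtain t where t: "t \<in> T" and en: "enabled F x t" and x': "x' = fire F x t"
    unfolding step_def by blast
  have pre_free: "bag_of (preset F t) p = 0 \<or> c p = 0" for p
    using unconsumed[OF t] by (auto simp: bag_of_def)
  have en_y: "enabled F y t"
    unfolding enabled_def le_fun_def
  proof
    fix p
    have "bag_of (preset F t) p \<le> y p + c p"
      using en x_split by (simp add: enabled_def le_fun_def)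
    then show "bag_of (preset F t) p \<le> y p" using pre_free[of p] by auto
  qed
  have "x' = fire F y t + c"
  proof
    fix p
    show "x' p = (fire F y t + c) p"
      using pre_free[of p] by (auto simp: x' x_split fire_def)
  qed
  moreover have "step T F y (fire F y t)"
    using t en_y unfolding step_def by blast
  then have "reach T F m (fire F y t)"
    using run_y unfolding reach_def by (rule rtranclp.rtrancl_into_rtrancl[rotated])
  ultimately show ?case by blast
qed

(* If no transition has an empty preset, nothing is enabled at the empty marking. *)
lemma reach_from_empty:
  assumes nonempty_pre: "\<And>t. t \<in> T \<Longrightarrow> preset F t \<noteq> {}"
    and run: "reach T F 0 x"
  shows "x = 0"
  using run[unfolded reach_def]
proof (induction rule: rtranclp_induct)
  case base
  then show ?case by simp
next
  case (step x x')
  then obtain t where t: "t \<in> T" and en: "enabled F 0 t"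
    unfolding step_def by blast
  obtain p where "p \<in> preset F t" using nonempty_pre[OF t] by blast
  then have "bag_of (preset F t) p = 1" by (simp add: bag_of_def)
  moreover have "bag_of (preset F t) p \<le> 0" using en by (simp add: enabled_def le_fun_def)
  ultimately show ?case by simp
qed

lemma scale_cancel:
  assumes "scale k (bag_of A) = y + scale k' (bag_of A)"
  shows "y = scale (k - k') (bag_of A)"
proof
  fix p
  show "y p = scale (k - k') (bag_of A) p"
    using fun_cong[OF assms, of p] by (auto simp: scale_def bag_of_def diff_mult_distrib)
qed

(* Sub-soundness contains k-soundness as its instance k' = 0, in every net. *)
lemma sub_sound_imp_star_sound:
  assumes "sub_sound T F In Out"
  shows "star_sound T F In Out"
  unfolding star_sound_def k_sound_def
proof (intro allI impI)
  fix k :: nat and m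
  assume "reach T F (scale k (bag_of In)) m"
  moreover have "m + scale 0 (bag_of Out) = m" by (simp add: scale_def zero_fun_def)
  ultimately show "reach T F m (scale k (bag_of Out))"
    using assms[unfolded sub_sound_def, rule_format, of 0 k m] by simp
qed

lemma star_sound_imp_sub_sound:
  assumes nonempty_pre: "\<And>t. t \<in> T \<Longrightarrow> preset F t \<noteq> {}"
    and out_unconsumed: "\<And>t. t \<in> T \<Longrightarrow> preset F t \<inter> Out = {}"
    and sound: "star_sound T F In Out"
  shows "sub_sound T F In Out"
  unfolding sub_sound_def
proof (intro allI impI)
  fix k k' m'
  assume k'_le: "k' \<le> k"
    and run: "reach T F (scale k (bag_of In)) (m' + scale k' (bag_of Out))"
  show "reach T F m' (scale (k - k') (bag_of Out))"
  proof (cases "k = 0")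
    case True
    then have "reach T F 0 (m' + scale k' (bag_of Out))"
      using run by (simp add: scale_def zero_fun_def)
    then have "m' + scale k' (bag_of Out) = 0"
      using reach_from_empty nonempty_pre by blast
    then have "m' = 0" by (simp add: fun_eq_iff)
    moreover have "scale (k - k') (bag_of Out) = 0"
      using True by (simp add: scale_def zero_fun_def)
    ultimately show ?thesis by (simp add: reach_def)
  next
    case False
    then have "reach T F (m' + scale k' (bag_of Out)) (scale k (bag_of Out))"
      using sound run by (simp add: star_sound_def k_sound_def)
    moreover have "scale k' (bag_of Out) p = 0"
      if "t \<in> T" "p \<in> preset F t" for t p
      using out_unconsumed[OF that(1)] that(2) by (auto simp: scale_def bag_of_def)
    ultimately obtain y where "scale k (bag_of Out) = y + scale k' (bag_of Out)"
      and "reach T F m' y"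
      using reach_frame_unconsumed by blast
    then show ?thesis using scale_cancel by metis
  qed
qed

lemma star_sound_iff_sub_sound:
  assumes "\<And>t. t \<in> T \<Longrightarrow> preset F t \<noteq> {}"
    and "\<And>t. t \<in> T \<Longrightarrow> preset F t \<inter> Out = {}"
  shows "star_sound T F In Out \<longleftrightarrow> sub_sound T F In Out"
  using assms sub_sound_imp_star_sound star_sound_imp_sub_sound by blast

lemma pc_POut_unconsumed: "preset (pc_flow F In Out) t \<inter> {POut} = {}"
  by (auto simp: preset_def pc_flow_def)

(* Every transition of the completion consumes a token: input transitions from p_i,
   the others from a predecessor on a path from an input transition. *)
lemma pc_preset_nonempty:
  assumes net: "tWF_net P T F In Out" and t: "t \<in> pc_trans T"
  shows "preset (pc_flow F In Out) t \<noteq> {}"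
proof -
  obtain s where s: "t = Orig s" "s \<in> T" using t by (auto simp: pc_trans_def)
  show ?thesis
  proof (cases "s \<in> In")
    case True
    then have "PIn \<in> preset (pc_flow F In Out) t"
      using s by (auto simp: preset_def pc_flow_def)
    then show ?thesis by blast
  next
    case False
    from net s(2) obtain i where i: "i \<in> In" "(i, s) \<in> F\<^sup>*"
      unfolding tWF_net_def wf_connected_def by blast
    with False obtain y where "(y, s) \<in> F" by (metis rtranclE)
    then have "Orig y \<in> preset (pc_flow F In Out) t"
      using s by (auto simp: preset_def pc_flow_def)
    then show ?thesis by blast
  qed
qed

theorem mainTheorem7:
  fixes P T :: "'n set" and F :: "('n \<times> 'n) set" and In Out :: "'n set"
  assumes "tWF_net P T F In Out"
  shows "tWF_star_sound P T F In Out \<longleftrightarrow> tWF_sub_sound P T F In Out"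
  unfolding tWF_star_sound_def tWF_sub_sound_def
  by (rule star_sound_iff_sub_sound[OF pc_preset_nonempty[OF assms] pc_POut_unconsumed])

end
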